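(* Let $(V,C,\sigma)$ be any election with $|V|=n$. For each candidate $a\in C$, the integral domination graph $G(a)$ admits a perfect matching if and only if the $(p^{\mathrm{uni}},q^{\mathrm{plu}})$-domination graph $G_{p^{\mathrm{uni}},q^{\mathrm{plu}}}(a)$ admits a fractional perfect matching. Consequently, there exists a candidate $a\in C$ whose integral domination graph admits a perfect matching, i.e.\ for which there is a bijection $M:V\to V$ with $a\succeq_i \mathrm{top}(M(i))$ for every $i\in V$.
   Context: An election consists of voters $V$ ($|V|=n\ge1$), a finite nonempty candidate set $C$, and a profile of linear orders $\sigma_i$ over $C$; $a\succeq_i c$ means $a=c$ or $i$ ranks $a$ above $c$; $\mathrm{top}(i)$ is $i$'s first choice; $\mathrm{plu}(c)=|\{i:\mathrm{top}(i)=c\}|$. Weights: $p^{\mathrm{uni}}(i)=1/n$ for all $i\in V$, and $q^{\mathrm{plu}}(c)=\mathrm{plu}(c)/n$ for all $c\in C$. For weight vectors $p$ on $V$ and $q$ on $C$ (nonnegative, summing to $1$), the $(p,q)$-domination graph $G_{p,q}(a)$ is the vertex-weighted bipartite graph with left vertices $V$ (weights $p(i)$), right vertices $C$ (weights $q(c)$), and edge $(i,c)$ iff $a\succeq_i c$; a fractional perfect matching is a nonnegative edge weighting whose total at each vertex equals that vertex's weight. The integral domination graph $G(a)$ is the bipartite graph with both sides copies of $V$ and edge $(i,j)$ iff $a\succeq_i\mathrm{top}(j)$. *)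

theory Defs
  imports Complex_Main
begin

text \<open>An election: finite nonempty voter set V, finite nonempty candidate set C,
  and for each voter i a linear order sigma i on C, where (a, c) \<in> sigma i
  means that voter i ranks a at least as high as c (a = c or a above c).\<close>

definition election :: "'v set \<Rightarrow> 'c set \<Rightarrow> ('v \<Rightarrow> ('c \<times> 'c) set) \<Rightarrow> bool" where
  "election V C \<sigma> \<longleftrightarrow> finite V \<and> V \<noteq> {} \<and> finite C \<and> C \<noteq> {} \<and>
     (\<forall>i\<in>V. linear_order_on C (\<sigma> i))"

definition wpref :: "('v \<Rightarrow> ('c \<times> 'c) set) \<Rightarrow> 'v \<Rightarrow> 'c \<Rightarrow> 'c \<Rightarrow> bool" where
  "wpref \<sigma> i a c \<longleftrightarrow> (a, c) \<in> \<sigma> i"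

definition top_choice :: "'c set \<Rightarrow> ('v \<Rightarrow> ('c \<times> 'c) set) \<Rightarrow> 'v \<Rightarrow> 'c" where
  "top_choice C \<sigma> i = (THE a. a \<in> C \<and> (\<forall>c\<in>C. wpref \<sigma> i a c))"

definition plu :: "'v set \<Rightarrow> 'c set \<Rightarrow> ('v \<Rightarrow> ('c \<times> 'c) set) \<Rightarrow> 'c \<Rightarrow> nat" where
  "plu V C \<sigma> c = card {i\<in>V. top_choice C \<sigma> i = c}"

definition p_uni :: "'v set \<Rightarrow> 'v \<Rightarrow> real" where
  "p_uni V i = 1 / real (card V)"

definition q_plu :: "'v set \<Rightarrow> 'c set \<Rightarrow> ('v \<Rightarrow> ('c \<times> 'c) set) \<Rightarrow> 'c \<Rightarrow> real" where
  "q_plu V C \<sigma> c = real (plu V C \<sigma> c) / real (card V)"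

definition has_frac_pm ::
  "'v set \<Rightarrow> 'c set \<Rightarrow> ('v \<Rightarrow> ('c \<times> 'c) set) \<Rightarrow> ('v \<Rightarrow> real) \<Rightarrow> ('c \<Rightarrow> real) \<Rightarrow> 'c \<Rightarrow> bool" where
  "has_frac_pm V C \<sigma> p q a \<longleftrightarrow>
     (\<exists>w :: 'v \<Rightarrow> 'c \<Rightarrow> real.
        (\<forall>i\<in>V. \<forall>c\<in>C. w i c \<ge> 0) \<and>
        (\<forall>i\<in>V. \<forall>c\<in>C. \<not> wpref \<sigma> i a c \<longrightarrow> w i c = 0) \<and>
        (\<forall>i\<in>V. (\<Sum>c\<in>C. w i c) = p i) \<and>
        (\<forall>c\<in>C. (\<Sum>i\<in>V. w i c) = q c))"

text \<open>Integral domination graph G(a): both sides copies of V, edge (i,j) iff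
  a \<succeq>_i top(j).\<close>
definition dom_edge :: "'c set \<Rightarrow> ('v \<Rightarrow> ('c \<times> 'c) set) \<Rightarrow> 'c \<Rightarrow> 'v \<Rightarrow> 'v \<Rightarrow> bool" where
  "dom_edge C \<sigma> a i j \<longleftrightarrow> wpref \<sigma> i a (top_choice C \<sigma> j)"

definition has_pm :: "'v set \<Rightarrow> 'c set \<Rightarrow> ('v \<Rightarrow> ('c \<times> 'c) set) \<Rightarrow> 'c \<Rightarrow> bool" where
  "has_pm V C \<sigma> a \<longleftrightarrow>
     (\<exists>M :: ('v \<times> 'v) set. M \<subseteq> V \<times> V \<and>
        (\<forall>(i, j)\<in>M. dom_edge C \<sigma> a i j) \<and>
        (\<forall>i\<in>V. \<exists>!j. (i, j) \<in> M) \<and>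
        (\<forall>j\<in>V. \<exists>!i. (i, j) \<in> M))"

end

theory Submission
  imports Defs "HOL-Combinatorics.Permutations"
begin

text \<open>
  A perfect matching of \<open>G(a)\<close> is a bijection \<open>M\<close> of the voters with \<open>a \<succeq>\<^sub>i top(M i)\<close>.
  Putting mass \<open>1/n\<close> on each edge \<open>(i, top(M i))\<close> gives a fractional perfect matching of the
  \<open>(p_uni, q_plu)\<close>-domination graph. Conversely, in a fractional perfect matching every set
  \<open>S\<close> of voters sends its mass \<open>|S|/n\<close> to candidates who therefore carry plurality mass at
  least \<open>|S|/n\<close>; this is Hall's condition for \<open>G(a)\<close>.

  For existence, let the voters in turn delete from the multiset of top choices one copy of
  the candidate they like least among those still present. The last remaining copy, of
  candidate \<open>a\<close> say, was present at every deletion, so each voter weakly prefers \<open>a\<close> to the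
  copy he deleted, and the deleted copies are a rearrangement of the top choices.
\<close>

lemma linear_order_on_finite_ex_first:
  assumes "linear_order_on C r" "finite S" "S \<noteq> {}" "S \<subseteq> C"
  shows "\<exists>m\<in>S. \<forall>c\<in>S. (m, c) \<in> r"
  using assms(2-4)
proof (induction S rule: finite_ne_induct)
  case (singleton x)
  then show ?case
    using assms(1) by (auto simp: linear_order_on_def partial_order_on_def preorder_on_def refl_on_def)
next
  case (insert x F)
  then obtain m where m: "m \<in> F" "\<forall>c\<in>F. (m, c) \<in> r" by auto
  have "x \<in> C" "m \<in> C"
    using m insert.prems by auto
  moreover have "refl_on C r" "trans r" "total_on C r"
    using assms(1) by (simp_all add: linear_order_on_def partial_order_on_def preorder_on_def)
  ultimately have "(x, m) \<in> r \<or> (m, x) \<in> r" "(x, x) \<in> r"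
    by (metis refl_onD total_on_def)+
  with m \<open>trans r\<close> show ?case
    by (metis insert_iff transD)
qed

lemma linear_order_on_finite_ex_last:
  assumes "linear_order_on C r" "finite S" "S \<noteq> {}" "S \<subseteq> C"
  shows "\<exists>m\<in>S. \<forall>c\<in>S. (c, m) \<in> r"
  using linear_order_on_finite_ex_first[OF linear_order_on_converse[THEN iffD2, OF assms(1)] assms(2-4)]
  by simp

lemma top_choice_in:
  assumes "election V C \<sigma>" "i \<in> V"
  shows "top_choice C \<sigma> i \<in> C"
proof -
  have lin: "linear_order_on C (\<sigma> i)" and "finite C" "C \<noteq> {}"
    using assms unfolding election_def by auto
  then obtain m where m: "m \<in> C" "\<forall>c\<in>C. wpref \<sigma> i m c"
    using linear_order_on_finite_ex_first[OF lin] unfolding wpref_def by blast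
  moreover have "antisym (\<sigma> i)"
    using lin by (simp add: linear_order_on_def partial_order_on_def)
  ultimately have "top_choice C \<sigma> i = m"
    unfolding top_choice_def wpref_def by (blast dest: antisymD)
  with m show ?thesis
    by simp
qed

definition hall_condition :: "'i set \<Rightarrow> ('i \<Rightarrow> 'b set) \<Rightarrow> bool" where
  "hall_condition I A \<longleftrightarrow> (\<forall>J\<subseteq>I. card J \<le> card (\<Union>(A ` J)))"

lemma hall_condition_subset: "hall_condition I A \<Longrightarrow> J \<subseteq> I \<Longrightarrow> hall_condition J A"
  unfolding hall_condition_def by auto

lemma hall_condition_card_pos:
  assumes "hall_condition I A" "i \<in> I"
  shows "0 < card (A i)"
proof -
  have "card {i} \<le> card (\<Union>(A ` {i}))"
    using assms unfolding hall_condition_def by blast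
  then show ?thesis
    by simp
qed

lemma hall_condition_remove_critical:
  assumes hall: "hall_condition I A" and "finite I" "J \<subseteq> I"
    and critical: "card (\<Union>(A ` J)) = card J"
  shows "hall_condition (I - J) (\<lambda>i. A i - \<Union>(A ` J))"
  unfolding hall_condition_def
proof (intro allI impI)
  fix K assume K: "K \<subseteq> I - J"
  let ?U = "\<Union>(A ` J)" and ?UKJ = "\<Union>(A ` (K \<union> J))"
  have "finite K" "finite J"
    using K assms(2,3) by (auto intro: finite_subset)
  have "finite ?UKJ"
    using K assms(3) hall_condition_card_pos[OF hall] card_gt_0_iff \<open>finite K\<close> \<open>finite J\<close> by blast
  have "K \<inter> J = {}"
    using K by blast
  then have "card K + card J = card (K \<union> J)"
    using \<open>finite K\<close> \<open>finite J\<close> by (simp add: card_Un_disjoint)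
  also have "\<dots> \<le> card ?UKJ"
    using hall K assms(3) unfolding hall_condition_def by (meson Diff_subset Un_least subset_trans)
  also have "\<dots> = card (?UKJ - ?U) + card ?U"
    using \<open>finite ?UKJ\<close> by (simp add: card_Diff_subset le_add_diff_inverse2 card_mono finite_subset)
  also have "?UKJ - ?U = \<Union>((\<lambda>i. A i - ?U) ` K)"
    by auto
  finally show "card K \<le> card (\<Union>((\<lambda>i. A i - ?U) ` K))"
    using critical by simp
qed

lemma hall_condition_remove_point:
  assumes hall: "hall_condition I A" and "finite I" "i\<^sub>0 \<in> I"
    and surplus: "\<And>J. J \<subseteq> I \<Longrightarrow> J \<noteq> {} \<Longrightarrow> J \<noteq> I \<Longrightarrow> card J < card (\<Union>(A ` J))"
  shows "hall_condition (I - {i\<^sub>0}) (\<lambda>i. A i - {x})"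
  unfolding hall_condition_def
proof (intro allI impI)
  fix K assume K: "K \<subseteq> I - {i\<^sub>0}"
  show "card K \<le> card (\<Union>((\<lambda>i. A i - {x}) ` K))"
  proof (cases "K = {}")
    case False
    then have "card K < card (\<Union>(A ` K))"
      using K assms(3) by (intro surplus) auto
    then have "card K \<le> card (\<Union>(A ` K)) - card {x}"
      by simp
    also have "\<dots> \<le> card (\<Union>(A ` K) - {x})"
      by (rule diff_card_le_card_Diff) simp
    also have "\<Union>(A ` K) - {x} = \<Union>((\<lambda>i. A i - {x}) ` K)"
      by blast
    finally show ?thesis .
  qed simp
qed

lemma inj_on_combine_critical:
  assumes "J \<subseteq> I" "inj_on f J" "\<forall>i\<in>J. f i \<in> A i"
    and "inj_on g (I - J)" "\<forall>i\<in>I - J. g i \<in> A i - \<Union>(A ` J)"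
  shows "\<exists>h. inj_on h I \<and> (\<forall>i\<in>I. h i \<in> A i)"
proof -
  have "f ` J \<subseteq> \<Union>(A ` J)" "g ` (I - J) \<inter> \<Union>(A ` J) = {}"
    using assms(3,5) by auto
  then have "f ` J \<inter> g ` (I - J) = {}"
    by blast
  then have "inj_on (\<lambda>i. if i \<in> J then f i else g i) (J \<union> (I - J))"
    by (rule inj_on_disjoint_Un[OF assms(2,4)])
  then show ?thesis
    using assms(1,3,5) by (intro exI[of _ "\<lambda>i. if i \<in> J then f i else g i"]) (auto simp: Un_absorb1)
qed

text \<open>
  Halmos--Vaughan induction: if some proper subset \<open>J\<close> is critical, match \<open>J\<close> inside its
  neighbourhood and the rest outside it; otherwise every proper subset has surplus, so any
  edge at any vertex can be fixed.
\<close>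
theorem hall_marriage:
  assumes "finite I" "hall_condition I A"
  shows "\<exists>f. inj_on f I \<and> (\<forall>i\<in>I. f i \<in> A i)"
  using assms
proof (induction "card I" arbitrary: I A rule: less_induct)
  case less
  consider "I = {}"
    | (critical) J where "J \<subseteq> I" "J \<noteq> {}" "J \<noteq> I" "card (\<Union>(A ` J)) = card J"
    | (surplus) "I \<noteq> {}"
        "\<And>J. J \<subseteq> I \<Longrightarrow> J \<noteq> {} \<Longrightarrow> J \<noteq> I \<Longrightarrow> card J < card (\<Union>(A ` J))"
    using less.prems(2) unfolding hall_condition_def by (metis le_neq_implies_less)
  then show ?case
  proof cases
    case critical
    have "finite J"
      using critical(1) less.prems(1) by (rule finite_subset)
    have "card J < card I"
      using critical(1,3) less.prems(1) by (simp add: psubset_card_mono)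
    have "card (I - J) < card I"
      using critical(1,2) less.prems(1) \<open>finite J\<close> card_mono[of I J] card_gt_0_iff[of J]
      by (simp add: card_Diff_subset)
    obtain f where "inj_on f J" "\<forall>i\<in>J. f i \<in> A i"
      using less.hyps[OF \<open>card J < card I\<close> \<open>finite J\<close>
          hall_condition_subset[OF less.prems(2) critical(1)]] by blast
    moreover obtain g where "inj_on g (I - J)" "\<forall>i\<in>I - J. g i \<in> A i - \<Union>(A ` J)"
      using less.hyps[OF \<open>card (I - J) < card I\<close> finite_Diff[OF less.prems(1)]
          hall_condition_remove_critical[OF less.prems(2,1) critical(1,4)]] by blast
    ultimately show ?thesis
      by (rule inj_on_combine_critical[OF critical(1)])
  next
    case surplus
    then obtain i\<^sub>0 where "i\<^sub>0 \<in> I" by blast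
    obtain x where "x \<in> A i\<^sub>0"
      using hall_condition_card_pos[OF less.prems(2) \<open>i\<^sub>0 \<in> I\<close>] by fastforce
    have "card (I - {i\<^sub>0}) < card I"
      using less.prems(1) \<open>i\<^sub>0 \<in> I\<close> by (rule card_Diff1_less)
    obtain g where g: "inj_on g (I - {i\<^sub>0})" "\<forall>i\<in>I - {i\<^sub>0}. g i \<in> A i - {x}"
      using less.hyps[OF \<open>card (I - {i\<^sub>0}) < card I\<close> finite_Diff[OF less.prems(1)]
          hall_condition_remove_point[OF less.prems(2,1) \<open>i\<^sub>0 \<in> I\<close> surplus(2)]] by blast
    have "inj_on (g(i\<^sub>0 := x)) (insert i\<^sub>0 (I - {i\<^sub>0}))"
      using g by (auto simp: inj_on_def)
    then show ?thesis
      using \<open>i\<^sub>0 \<in> I\<close> \<open>x \<in> A i\<^sub>0\<close> g(2)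
      by (intro exI[of _ "g(i\<^sub>0 := x)"]) (auto simp: insert_absorb)
  qed auto
qed

lemma bij_betw_of_perfect_matching:
  assumes "M \<subseteq> A \<times> B" "\<forall>i\<in>A. \<exists>!j. (i, j) \<in> M" "\<forall>j\<in>B. \<exists>!i. (i, j) \<in> M"
  shows "\<exists>g. bij_betw g A B \<and> (\<forall>i\<in>A. (i, g i) \<in> M)"
proof -
  define g where "g i = (THE j. (i, j) \<in> M)" for i
  define h where "h j = (THE i. (i, j) \<in> M)" for j
  have g: "(i, g i) \<in> M" if "i \<in> A" for i
    unfolding g_def by (rule theI') (use assms(2) that in blast)
  have h: "(h j, j) \<in> M" if "j \<in> B" for j
    unfolding h_def by (rule theI') (use assms(3) that in blast)
  have "bij_betw g A B"
  proof (rule bij_betw_byWitness[where f' = h])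
    show "\<forall>i\<in>A. h (g i) = i" "\<forall>j\<in>B. g (h j) = j" "g ` A \<subseteq> B" "h ` B \<subseteq> A"
      using g h assms by blast+
  qed
  with g show ?thesis
    by blast
qed

lemma has_pm_iff_bij:
  "has_pm V C \<sigma> a \<longleftrightarrow> (\<exists>g. bij_betw g V V \<and> (\<forall>i\<in>V. dom_edge C \<sigma> a i (g i)))"
proof
  assume "has_pm V C \<sigma> a"
  then obtain M where M: "M \<subseteq> V \<times> V" "\<forall>(i, j)\<in>M. dom_edge C \<sigma> a i j"
    "\<forall>i\<in>V. \<exists>!j. (i, j) \<in> M" "\<forall>j\<in>V. \<exists>!i. (i, j) \<in> M"
    unfolding has_pm_def by blast
  then show "\<exists>g. bij_betw g V V \<and> (\<forall>i\<in>V. dom_edge C \<sigma> a i (g i))"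
    using bij_betw_of_perfect_matching[OF M(1,3,4)] by fast
next
  assume "\<exists>g. bij_betw g V V \<and> (\<forall>i\<in>V. dom_edge C \<sigma> a i (g i))"
  then obtain g where g: "bij_betw g V V" "\<forall>i\<in>V. dom_edge C \<sigma> a i (g i)"
    by blast
  let ?M = "(\<lambda>i. (i, g i)) ` V"
  have "?M \<subseteq> V \<times> V" "\<forall>(i, j)\<in>?M. dom_edge C \<sigma> a i j" "\<forall>i\<in>V. \<exists>!j. (i, j) \<in> ?M"
    using g bij_betwE by fastforce+
  moreover have "\<forall>j\<in>V. \<exists>!i. (i, j) \<in> ?M"
    using g(1) unfolding bij_betw_def inj_on_def by blast
  ultimately show "has_pm V C \<sigma> a"
    unfolding has_pm_def by blast
qed

lemma plu_eq_count:
  "finite V \<Longrightarrow> plu V C \<sigma> c = count (image_mset (top_choice C \<sigma>) (mset_set V)) c"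
  by (simp add: plu_def count_image_mset_eq_card_vimage)

lemma sum_plu:
  assumes "finite V" "finite N"
  shows "(\<Sum>c\<in>N. plu V C \<sigma> c) = card {j\<in>V. top_choice C \<sigma> j \<in> N}"
proof -
  have "{j\<in>V. top_choice C \<sigma> j \<in> N} = (\<Union>c\<in>N. {j\<in>V. top_choice C \<sigma> j = c})"
    by auto
  also have "card \<dots> = (\<Sum>c\<in>N. card {j\<in>V. top_choice C \<sigma> j = c})"
    using assms by (subst card_UN_disjoint) auto
  finally show ?thesis
    unfolding plu_def ..
qed

lemma has_frac_pm_of_assignment:
  assumes el: "election V C \<sigma>"
    and profile: "image_mset f (mset_set V) = image_mset (top_choice C \<sigma>) (mset_set V)"
    and dominated: "\<forall>i\<in>V. wpref \<sigma> i a (f i)"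
  shows "has_frac_pm V C \<sigma> (p_uni V) (q_plu V C \<sigma>) a"
proof -
  have fin: "finite V" "finite C"
    using el unfolding election_def by auto
  have fC: "f i \<in> C" if "i \<in> V" for i
  proof -
    have "f i \<in># image_mset (top_choice C \<sigma>) (mset_set V)"
      using that fin(1) by (simp flip: profile)
    then show ?thesis
      using top_choice_in[OF el] fin(1) by auto
  qed
  define w where "w i c = (if c = f i then 1 / real (card V) else 0)" for i c
  have "(\<Sum>c\<in>C. w i c) = p_uni V i" if "i \<in> V" for i
    using fC[OF that] fin(2) by (simp add: w_def p_uni_def)
  moreover have "(\<Sum>i\<in>V. w i c) = q_plu V C \<sigma> c" for c
  proof -
    have "(\<Sum>i\<in>V. w i c) = real (card {i\<in>V. f i = c}) / real (card V)"
      unfolding w_def using fin(1) by (simp add: sum.If_cases Int_def eq_commute)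
    also have "card {i\<in>V. f i = c} = plu V C \<sigma> c"
      using fin(1) by (simp add: plu_eq_count profile flip: count_image_mset_eq_card_vimage)
    finally show ?thesis
      unfolding q_plu_def .
  qed
  moreover have "\<forall>i\<in>V. \<forall>c\<in>C. w i c \<ge> 0 \<and> (\<not> wpref \<sigma> i a c \<longrightarrow> w i c = 0)"
    using dominated by (auto simp: w_def)
  ultimately show ?thesis
    unfolding has_frac_pm_def by blast
qed

lemma has_frac_pm_if_has_pm:
  assumes el: "election V C \<sigma>" and "has_pm V C \<sigma> a"
  shows "has_frac_pm V C \<sigma> (p_uni V) (q_plu V C \<sigma>) a"
proof -
  obtain g where g: "bij_betw g V V" "\<forall>i\<in>V. dom_edge C \<sigma> a i (g i)"
    using assms(2) unfolding has_pm_iff_bij by blast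
  have "image_mset (top_choice C \<sigma> \<circ> g) (mset_set V)
      = image_mset (top_choice C \<sigma>) (image_mset g (mset_set V))"
    by (simp add: multiset.map_comp)
  also have "image_mset g (mset_set V) = mset_set V"
    using g(1) by (simp add: bij_betw_def image_mset_mset_set)
  finally have "image_mset (top_choice C \<sigma> \<circ> g) (mset_set V)
      = image_mset (top_choice C \<sigma>) (mset_set V)" .
  moreover have "\<forall>i\<in>V. wpref \<sigma> i a ((top_choice C \<sigma> \<circ> g) i)"
    using g(2) unfolding dom_edge_def by simp
  ultimately show ?thesis
    by (rule has_frac_pm_of_assignment[OF el])
qed

lemma has_frac_pm_sum_le_neighbourhood:
  assumes "finite V" "finite C" "has_frac_pm V C \<sigma> p q a" "S \<subseteq> V"
  shows "(\<Sum>i\<in>S. p i) \<le> (\<Sum>c | c \<in> C \<and> (\<exists>i\<in>S. wpref \<sigma> i a c). q c)"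
proof -
  let ?N = "{c. c \<in> C \<and> (\<exists>i\<in>S. wpref \<sigma> i a c)}"
  obtain w where w_nonneg: "\<forall>i\<in>V. \<forall>c\<in>C. w i c \<ge> 0"
    and w_edges: "\<forall>i\<in>V. \<forall>c\<in>C. \<not> wpref \<sigma> i a c \<longrightarrow> w i c = 0"
    and w_rows: "\<forall>i\<in>V. (\<Sum>c\<in>C. w i c) = p i"
    and w_cols: "\<forall>c\<in>C. (\<Sum>i\<in>V. w i c) = q c"
    using assms(3) unfolding has_frac_pm_def by blast
  have "(\<Sum>i\<in>S. p i) = (\<Sum>i\<in>S. \<Sum>c\<in>C. w i c)"
    using w_rows assms(4) by (intro sum.cong) auto
  also have "\<dots> = (\<Sum>c\<in>C. \<Sum>i\<in>S. w i c)"
    by (rule sum.swap)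
  also have "\<dots> = (\<Sum>c\<in>?N. \<Sum>i\<in>S. w i c)"
    using w_edges assms(2,4) by (intro sum.mono_neutral_right) (auto intro!: sum.neutral)
  also have "\<dots> \<le> (\<Sum>c\<in>?N. \<Sum>i\<in>V. w i c)"
    using w_nonneg assms(1,4) by (intro sum_mono sum_mono2) auto
  also have "\<dots> = (\<Sum>c\<in>?N. q c)"
    using w_cols by (intro sum.cong) auto
  finally show ?thesis .
qed

lemma has_pm_if_has_frac_pm:
  assumes el: "election V C \<sigma>" and frac: "has_frac_pm V C \<sigma> (p_uni V) (q_plu V C \<sigma>) a"
  shows "has_pm V C \<sigma> a"
proof -
  have fin: "finite V" "finite C" "V \<noteq> {}"
    using el unfolding election_def by auto
  define A where "A i = {j\<in>V. dom_edge C \<sigma> a i j}" for i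
  have "hall_condition V A"
    unfolding hall_condition_def
  proof (intro allI impI)
    fix S assume "S \<subseteq> V"
    let ?N = "{c. c \<in> C \<and> (\<exists>i\<in>S. wpref \<sigma> i a c)}"
    have "\<Union>(A ` S) = {j\<in>V. top_choice C \<sigma> j \<in> ?N}"
      unfolding A_def dom_edge_def using top_choice_in[OF el] by auto
    have "real (card S) / real (card V) = (\<Sum>i\<in>S. p_uni V i)"
      by (simp add: p_uni_def)
    also have "\<dots> \<le> (\<Sum>c\<in>?N. q_plu V C \<sigma> c)"
      by (rule has_frac_pm_sum_le_neighbourhood[OF fin(1,2) frac \<open>S \<subseteq> V\<close>])
    also have "\<dots> = real (card (\<Union>(A ` S))) / real (card V)"
      unfolding q_plu_def \<open>\<Union>(A ` S) = _\<close> using fin(1,2)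
      by (simp add: sum_divide_distrib[symmetric] sum_plu flip: of_nat_sum)
    finally show "card S \<le> card (\<Union>(A ` S))"
      using fin by (simp add: divide_le_cancel card_gt_0_iff)
  qed
  then obtain f where f: "inj_on f V" "\<forall>i\<in>V. f i \<in> A i"
    using hall_marriage[OF fin(1)] by blast
  then have "f ` V = V"
    using fin(1) by (intro endo_inj_surj) (auto simp: A_def)
  then show ?thesis
    unfolding has_pm_iff_bij bij_betw_def using f by (auto simp: A_def)
qed

lemma ex_dominating_assignment:
  assumes "finite W" "W \<noteq> {}" "\<forall>i\<in>W. linear_order_on C (\<sigma> i)"
    and "set_mset M \<subseteq> C" "size M = card W"
  shows "\<exists>a\<in>#M. \<exists>f. image_mset f (mset_set W) = M \<and> (\<forall>i\<in>W. wpref \<sigma> i a (f i))"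
  using assms
proof (induction W arbitrary: M rule: finite_induct)
  case (insert x F)
  have "M \<noteq> {#}"
    using insert.hyps insert.prems(4) by auto
  then obtain v where "v \<in># M" and v_last: "\<forall>c\<in>#M. wpref \<sigma> x c v"
    using linear_order_on_finite_ex_last[of C "\<sigma> x" "set_mset M"] insert.prems(2,3)
    unfolding wpref_def by auto
  have "\<exists>a\<in>#M. \<exists>g. image_mset g (mset_set F) = M - {#v#} \<and> (\<forall>i\<in>F. wpref \<sigma> i a (g i))"
  proof (cases "F = {}")
    case True
    then have "size (M - {#v#}) = 0"
      using \<open>v \<in># M\<close> insert.prems(4) by (simp add: size_Diff_singleton)
    with True \<open>v \<in># M\<close> show ?thesis
      by auto
  next
    case False
    have "\<forall>i\<in>F. linear_order_on C (\<sigma> i)"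
      using insert.prems(2) by simp
    moreover have "set_mset (M - {#v#}) \<subseteq> C" "size (M - {#v#}) = card F"
      using \<open>v \<in># M\<close> insert.hyps insert.prems(3,4) by (auto simp: size_Diff_singleton dest: in_diffD)
    ultimately show ?thesis
      using insert.IH[OF False] by (blast dest: in_diffD)
  qed
  then obtain a g where "a \<in># M" and g_image: "image_mset g (mset_set F) = M - {#v#}"
    and g_dominated: "\<forall>i\<in>F. wpref \<sigma> i a (g i)"
    by blast
  have "image_mset (g(x := v)) (mset_set F) = image_mset g (mset_set F)"
    using insert.hyps by (intro image_mset_cong) auto
  then have "image_mset (g(x := v)) (mset_set (insert x F)) = add_mset v (M - {#v#})"
    using insert.hyps g_image by simp
  also have "\<dots> = M"
    using \<open>v \<in># M\<close> by (rule insert_DiffM)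
  finally have "image_mset (g(x := v)) (mset_set (insert x F)) = M" .
  moreover have "\<forall>i\<in>insert x F. wpref \<sigma> i a ((g(x := v)) i)"
    using g_dominated v_last \<open>a \<in># M\<close> insert.hyps(2) by auto
  ultimately show ?case
    using \<open>a \<in># M\<close> by blast
qed simp

theorem corollary1:
  fixes V :: "'v set" and C :: "'c set" and \<sigma> :: "'v \<Rightarrow> ('c \<times> 'c) set"
  assumes "election V C \<sigma>"
  shows "(\<forall>a\<in>C. has_pm V C \<sigma> a \<longleftrightarrow> has_frac_pm V C \<sigma> (p_uni V) (q_plu V C \<sigma>) a) \<and>
         (\<exists>a\<in>C. has_pm V C \<sigma> a \<and>
            (\<exists>M. bij_betw M V V \<and> (\<forall>i\<in>V. wpref \<sigma> i a (top_choice C \<sigma> (M i)))))"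
proof -
  let ?tops = "image_mset (top_choice C \<sigma>) (mset_set V)"
  have "finite V" "V \<noteq> {}" "\<forall>i\<in>V. linear_order_on C (\<sigma> i)"
    using assms unfolding election_def by auto
  moreover have "set_mset ?tops \<subseteq> C" "size ?tops = card V"
    using top_choice_in[OF assms] \<open>finite V\<close> by auto
  ultimately have
    "\<exists>a\<in>#?tops. \<exists>f. image_mset f (mset_set V) = ?tops \<and> (\<forall>i\<in>V. wpref \<sigma> i a (f i))"
    by (rule ex_dominating_assignment)
  then obtain a f where "a \<in># ?tops" "image_mset f (mset_set V) = ?tops"
    and f_dominated: "\<forall>i\<in>V. wpref \<sigma> i a (f i)"
    by blast
  moreover obtain M where "M permutes V" "\<forall>i\<in>V. f i = top_choice C \<sigma> (M i)"
    using image_mset_eq_implies_permutes[OF \<open>finite V\<close> \<open>image_mset f _ = ?tops\<close>] by blast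
  ultimately have "a \<in> C" "bij_betw M V V" "\<forall>i\<in>V. wpref \<sigma> i a (top_choice C \<sigma> (M i))"
    using \<open>set_mset ?tops \<subseteq> C\<close> by (auto simp: permutes_imp_bij)
  moreover have "has_pm V C \<sigma> a"
    using calculation unfolding has_pm_iff_bij dom_edge_def by blast
  ultimately show ?thesis
    using has_pm_if_has_frac_pm[OF assms] has_frac_pm_if_has_pm[OF assms] by blast
qed

end
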